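(* Let $\pi$ be a chunking policy, $\epsilon>0$, $\rho_T\sim\mathcal{D}_{\mathrm{exp}}$, $\rho'_T\sim\mathcal{D}_\pi$, and let $J$ be a real-valued cost on length-$T$ trajectories. (a) If $\sup_\rho|J(\rho)|\le B$ and $J$ is $L$-Lipschitz in the Euclidean norm (viewing $\rho_T$ as a vector in $\mathbb{R}^{(T+1)d_x+Td_u}$), then $|\mathbb{E}J(\rho_T)-\mathbb{E}J(\rho'_T)|\le\sqrt{2T}L\epsilon+2B\,\mathrm{Imit}_{\mathrm{joint},\epsilon}(\pi)$. (b) If $J(\rho)=c_{T+1}(x_{T+1})+\sum_{t=1}^T\big(c_t(x_t)+c'_t(u_t)\big)$ where all $c_t,c'_t$ are $L$-Lipschitz and bounded in absolute value by $B$, then $|\mathbb{E}J(\rho_T)-\mathbb{E}J(\rho'_T)|\le 4TB\,\mathrm{Imit}_{\mathrm{marg},\epsilon}(\pi)+2TL\epsilon$. (c) If $J(\rho)=c_{T+1}(x_{T+1})$ with $c_{T+1}$ $L$-Lipschitz and bounded in absolute value by $B$, then $|\mathbb{E}J(\rho_T)-\mathbb{E}J(\rho'_T)|\le 2B\,\mathrm{Imit}_{\mathrm{fin},\epsilon}(\pi)+L\epsilon$.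
   Context: Dynamics $x_{t+1}=f(x_t,u_t)$, $x_t\in\mathbb{R}^{d_x}$, $u_t\in\mathbb{R}^{d_u}$. Trajectories $\rho_T=(x_{1:T+1},u_{1:T})$. Primitive controllers $\kappa(x)=\bar u+\bar K(x-\bar x)$; with $T=H\tau_c$, $t_h=(h-1)\tau_c+1$ and $\tau_o\le\tau_c$, observation chunks are $o_h=(x_{t_h-\tau_o+1:t_h},u_{t_h-\tau_o+1:t_h-1})$ for $h>1$, $o_1=(0,\dots,0,x_1)$, and composite actions are $a_h=(\kappa_{t_h},\dots,\kappa_{t_{h+1}-1})$. A chunking policy is a sequence of kernels $\pi_h$ from observation chunks to distributions over composite actions; $\mathcal{D}_\pi$ is the trajectory law when $x_1$ is drawn from the law of $x_1$ under $\mathcal{D}_{\mathrm{exp}}$, $a_h\sim\pi_h(o_h)$ with fresh randomness, and $u_t=\kappa_t(x_t)$ for $t_h\le t<t_{h+1}$. $\mathcal{D}_{\mathrm{exp}}$ is a given distribution over trajectories. In all infima below, $\mu$ ranges over couplings of $\mathcal{D}_{\mathrm{exp}}$ (trajectory $x^{\mathrm{exp}},u^{\mathrm{exp}}$) and $\mathcal{D}_\pi$ (trajectory $x^\pi,u^\pi$) with $x^{\mathrm{exp}}_1=x^\pi_1$ a.s.: $\mathrm{Imit}_{\mathrm{joint},\epsilon}(\pi)=\inf_\mu\Pr_\mu[\max_{t\in[T]}\max\{\|x^{\mathrm{exp}}_{t+1}-x^\pi_{t+1}\|,\|u^{\mathrm{exp}}_t-u^\pi_t\|\}>\epsilon]$;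 $\mathrm{Imit}_{\mathrm{marg},\epsilon}(\pi)=\max_{t\in[T]}\inf_\mu\Pr_\mu[\max\{\|x^{\mathrm{exp}}_{t+1}-x^\pi_{t+1}\|,\|u^{\mathrm{exp}}_t-u^\pi_t\|\}>\epsilon]$; $\mathrm{Imit}_{\mathrm{fin},\epsilon}(\pi)=\inf_\mu\Pr_\mu[\|x^{\mathrm{exp}}_{T+1}-x^\pi_{T+1}\|>\epsilon]$. *)

theory Defs
  imports "HOL-Probability.Probability"
begin

text \<open>States are in real^'n (Euclidean norm), inputs in real^'m.
  A trajectory (x_{1..T+1}, u_{1..T}) is a pair of functions on nat, extensional
  on {1..T+1} resp. {1..T}.\<close>

type_synonym ('n,'m) traj = "(nat \<Rightarrow> real^'n) \<times> (nat \<Rightarrow> real^'m)"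

text \<open>Primitive controller kappa(x) = ubar + Kbar (x - xbar), stored as (ubar, Kbar, xbar).\<close>
type_synonym ('n,'m) ctrl = "(real^'m) \<times> (real^'n^'m) \<times> (real^'n)"

definition ctrl_apply :: "('n::finite,'m::finite) ctrl \<Rightarrow> real^'n \<Rightarrow> real^'m" where
  "ctrl_apply k x = (case k of (ub, K, xb) \<Rightarrow> ub + K *v (x - xb))"

definition traj_space :: "nat \<Rightarrow> ('n::finite,'m::finite) traj measure" where
  "traj_space T = (\<Pi>\<^sub>M t\<in>{1..T+1}. borel) \<Otimes>\<^sub>M (\<Pi>\<^sub>M t\<in>{1..T}. borel)"

text \<open>Observation chunk o_h = (x_{t_h-tau_o+1..t_h}, u_{t_h-tau_o+1..t_h-1}), indexed by
  i in {1..tau_o} (resp. {1..tau_o-1}) as x_{t_h-tau_o+i}, u_{t_h-tau_o+i}.\<close>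
definition obs_space :: "nat \<Rightarrow> ((nat \<Rightarrow> real^'n::finite) \<times> (nat \<Rightarrow> real^'m::finite)) measure" where
  "obs_space tau_o = (\<Pi>\<^sub>M i\<in>{1..tau_o}. borel) \<Otimes>\<^sub>M (\<Pi>\<^sub>M i\<in>{1..tau_o-1}. borel)"

text \<open>Composite action a_h = (kappa_{t_h}, ..., kappa_{t_{h+1}-1}), indexed by j in {0..<tau_c}
  as kappa_{t_h+j}.\<close>
definition act_space :: "nat \<Rightarrow> (nat \<Rightarrow> ('n::finite,'m::finite) ctrl) measure" where
  "act_space tau_c = (\<Pi>\<^sub>M j\<in>{0..<tau_c}. borel)"

definition chunk_start :: "nat \<Rightarrow> nat \<Rightarrow> nat" where
  "chunk_start tau_c h = (h - 1) * tau_c + 1"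

definition obs :: "nat \<Rightarrow> nat \<Rightarrow> nat \<Rightarrow> ('n::finite,'m::finite) traj
    \<Rightarrow> (nat \<Rightarrow> real^'n) \<times> (nat \<Rightarrow> real^'m)" where
  "obs tau_c tau_o h \<rho> =
     (if h = 1 then ((\<lambda>i\<in>{1..tau_o}. if i = tau_o then fst \<rho> 1 else 0), (\<lambda>i\<in>{1..tau_o-1}. 0))
      else ((\<lambda>i\<in>{1..tau_o}. fst \<rho> (chunk_start tau_c h + i - tau_o)),
            (\<lambda>i\<in>{1..tau_o-1}. snd \<rho> (chunk_start tau_c h + i - tau_o))))"

primrec chunk_roll :: "(real^'n \<Rightarrow> real^'m \<Rightarrow> real^'n) \<Rightarrow> nat \<Rightarrow> (nat \<Rightarrow> ('n::finite,'m::finite) ctrl)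
    \<Rightarrow> nat \<Rightarrow> ('n,'m) traj \<Rightarrow> ('n,'m) traj" where
  "chunk_roll f t0 a 0 \<rho> = \<rho>"
| "chunk_roll f t0 a (Suc k) \<rho> =
     (let \<rho>' = chunk_roll f t0 a k \<rho>; t = t0 + k; x = fst \<rho>' t; u = ctrl_apply (a k) x
      in ((fst \<rho>')(t + 1 := f x u), (snd \<rho>')(t := u)))"

definition traj_init :: "nat \<Rightarrow> real^'n::finite \<Rightarrow> ('n,'m::finite) traj" where
  "traj_init T x1 = ((\<lambda>t\<in>{1..T+1}. if t = 1 then x1 else 0), (\<lambda>t\<in>{1..T}. 0))"

text \<open>Law of the partial trajectory after h chunks; policy_law ... H is D_pi.\<close>
primrec policy_law :: "(real^'n \<Rightarrow> real^'m \<Rightarrow> real^'n) \<Rightarrow> ('n::finite,'m::finite) traj measure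
    \<Rightarrow> (nat \<Rightarrow> (nat \<Rightarrow> real^'n) \<times> (nat \<Rightarrow> real^'m) \<Rightarrow> (nat \<Rightarrow> ('n,'m) ctrl) measure)
    \<Rightarrow> nat \<Rightarrow> nat \<Rightarrow> nat \<Rightarrow> nat \<Rightarrow> ('n,'m) traj measure" where
  "policy_law f Dexp \<pi> T tau_c tau_o 0 = distr Dexp (traj_space T) (\<lambda>\<rho>. traj_init T (fst \<rho> 1))"
| "policy_law f Dexp \<pi> T tau_c tau_o (Suc h) =
     policy_law f Dexp \<pi> T tau_c tau_o h \<bind>
       (\<lambda>\<rho>. distr (\<pi> (Suc h) (obs tau_c tau_o (Suc h) \<rho>)) (traj_space T)
               (\<lambda>a. chunk_roll f (chunk_start tau_c (Suc h)) a tau_c \<rho>))"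

definition couplings :: "nat \<Rightarrow> ('n::finite,'m::finite) traj measure \<Rightarrow> ('n,'m) traj measure
    \<Rightarrow> (('n,'m) traj \<times> ('n,'m) traj) measure set" where
  "couplings T P Q = {\<mu>. prob_space \<mu> \<and> sets \<mu> = sets (traj_space T \<Otimes>\<^sub>M traj_space T)
      \<and> distr \<mu> (traj_space T) fst = P \<and> distr \<mu> (traj_space T) snd = Q
      \<and> (AE z in \<mu>. fst (fst z) 1 = fst (snd z) 1)}"

definition Imit_joint :: "nat \<Rightarrow> real \<Rightarrow> ('n::finite,'m::finite) traj measure \<Rightarrow> ('n,'m) traj measure \<Rightarrow> ennreal" where
  "Imit_joint T \<epsilon> P Q = (INF \<mu>\<in>couplings T P Q. emeasure \<mu> {z\<in>space \<mu>.
       \<exists>t\<in>{1..T}. max (dist (fst (fst z) (t+1)) (fst (snd z) (t+1))) (dist (snd (fst z) t) (snd (snd z) t)) > \<epsilon>})"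

definition Imit_marg :: "nat \<Rightarrow> real \<Rightarrow> ('n::finite,'m::finite) traj measure \<Rightarrow> ('n,'m) traj measure \<Rightarrow> ennreal" where
  "Imit_marg T \<epsilon> P Q = (SUP t\<in>{1..T}. INF \<mu>\<in>couplings T P Q. emeasure \<mu> {z\<in>space \<mu>.
       max (dist (fst (fst z) (t+1)) (fst (snd z) (t+1))) (dist (snd (fst z) t) (snd (snd z) t)) > \<epsilon>})"

definition Imit_fin :: "nat \<Rightarrow> real \<Rightarrow> ('n::finite,'m::finite) traj measure \<Rightarrow> ('n,'m) traj measure \<Rightarrow> ennreal" where
  "Imit_fin T \<epsilon> P Q = (INF \<mu>\<in>couplings T P Q. emeasure \<mu> {z\<in>space \<mu>.
       dist (fst (fst z) (T+1)) (fst (snd z) (T+1)) > \<epsilon>})"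

definition traj_dist :: "nat \<Rightarrow> ('n::finite,'m::finite) traj \<Rightarrow> ('n,'m) traj \<Rightarrow> real" where
  "traj_dist T \<rho> \<rho>' = sqrt ((\<Sum>t=1..T+1. (dist (fst \<rho> t) (fst \<rho>' t))\<^sup>2) + (\<Sum>t=1..T. (dist (snd \<rho> t) (snd \<rho>' t))\<^sup>2))"

end

theory Submission
  imports Defs
begin

text \<open>For a coupling \<open>\<mu>\<close> of \<open>D_exp\<close> and \<open>D_\<pi>\<close> whose initial states agree, the gap
  \<open>E J(\<rho>) - E J(\<rho>')\<close> is the \<open>\<mu>\<close>-expectation of \<open>J(\<rho>) - J(\<rho>')\<close>. Outside the event that
  the two trajectories drift more than \<open>\<epsilon>\<close> apart this difference is controlled by the
  Lipschitz constant, and on that event by twice the bound on the cost; taking the infimum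
  over couplings gives each estimate. In (b) every time step is estimated with its own
  coupling, after the term in \<open>x\<^sub>1\<close> has cancelled.\<close>

lemma le_cmult_INF_add_ennreal:
  fixes e :: "'a \<Rightarrow> ennreal" and a c :: ennreal
  assumes "S \<noteq> {}" and "\<And>\<mu>. \<mu> \<in> S \<Longrightarrow> a \<le> ennreal r * e \<mu> + c"
  shows "a \<le> ennreal r * (INF \<mu>\<in>S. e \<mu>) + c"
proof -
  have cont: "continuous_on UNIV (\<lambda>x::ennreal. ennreal r * x + c)"
    by (intro continuous_on_add continuous_on_const ennreal_continuous_on_cmult continuous_on_id) simp
  have "ennreal r * Inf (e ` S) + c = (INF x\<in>e ` S. ennreal r * x + c)"
    by (rule continuous_at_Inf_mono)
      (use assms(1) cont in \<open>auto simp: mono_def continuous_on_eq_continuous_within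
        intro: continuous_within_subset add_mono mult_left_mono\<close>)
  moreover have "a \<le> (INF x\<in>e ` S. ennreal r * x + c)"
    using assms(2) by (auto intro!: INF_greatest)
  ultimately show ?thesis by simp
qed

lemma (in prob_space) abs_integral_le_event_bound:
  fixes G :: "'a \<Rightarrow> real"
  assumes G: "G \<in> borel_measurable M" and G_bound: "\<forall>z\<in>space M. \<bar>G z\<bar> \<le> K"
    and G_off_E: "AE z in M. z \<notin> E \<longrightarrow> \<bar>G z\<bar> \<le> C" and E: "E \<in> events" and "0 \<le> C"
  shows "\<bar>\<integral>z. G z \<partial>M\<bar> \<le> K * prob E + C"
proof -
  have bound_integrable: "integrable M (\<lambda>z. K * indicator E z + C)"
    using E by (intro Bochner_Integration.integrable_add integrable_mult_right integrable_real_indicator)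
      (auto simp: emeasure_eq_measure)
  have "\<bar>\<integral>z. G z \<partial>M\<bar> \<le> (\<integral>z. \<bar>G z\<bar> \<partial>M)" by (rule integral_abs_bound)
  also have "\<dots> \<le> (\<integral>z. K * indicator E z + C \<partial>M)"
  proof (rule integral_mono_AE[OF _ bound_integrable])
    show "integrable M (\<lambda>z. \<bar>G z\<bar>)"
      using G G_bound by (intro integrable_abs integrable_const_bound[where B=K]) auto
    show "AE z in M. \<bar>G z\<bar> \<le> K * indicator E z + C"
      using G_off_E AE_space by eventually_elim (use G_bound \<open>0 \<le> C\<close> in \<open>auto simp: indicator_def\<close>)
  qed
  also have "\<dots> = K * prob E + C"
    using E bound_integrable
    by (subst Bochner_Integration.integral_add) (auto simp: prob_space emeasure_eq_measure)
  finally show ?thesis .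
qed

lemma (in finite_measure) integrable_bounded_sets_eq:
  fixes f :: "'a \<Rightarrow> real"
  assumes "sets M = sets N" and "f \<in> borel_measurable N" and "\<forall>x\<in>space N. \<bar>f x\<bar> \<le> K"
  shows "integrable M f"
  using assms sets_eq_imp_space_eq[OF assms(1)]
  by (intro integrable_const_bound[where B=K]) (auto simp: measurable_cong_sets[OF assms(1) refl])

lemma ennreal_abs_sum_le_card_mult:
  fixes d :: "'a \<Rightarrow> real"
  assumes "\<And>s. s \<in> S \<Longrightarrow> ennreal \<bar>d s\<bar> \<le> x"
  shows "ennreal \<bar>\<Sum>s\<in>S. d s\<bar> \<le> of_nat (card S) * x"
proof -
  have "ennreal \<bar>\<Sum>s\<in>S. d s\<bar> \<le> (\<Sum>s\<in>S. ennreal \<bar>d s\<bar>)"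
    by (simp add: ennreal_leI sum_abs)
  also have "\<dots> \<le> (\<Sum>s\<in>S. x)"
    by (intro sum_mono assms)
  finally show ?thesis by simp
qed

lemma borel_measurable_lipschitz_bound:
  fixes c :: "'a::metric_space \<Rightarrow> real"
  assumes "\<forall>x y. \<bar>c x - c y\<bar> \<le> L * dist x y"
  shows "c \<in> borel_measurable borel"
proof -
  have "(max 0 L)-lipschitz_on UNIV c"
  proof (rule lipschitz_onI)
    fix x y :: 'a
    have "L * dist x y \<le> max 0 L * dist x y" by (intro mult_right_mono) auto
    then show "dist (c x) (c y) \<le> max 0 L * dist x y"
      using assms by (metis dist_real_def order_trans)
  qed simp
  then show ?thesis by (intro borel_measurable_continuous_onI lipschitz_on_continuous_on)
qed

lemma abs_le_max_0_mult:
  fixes a L d e :: real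
  assumes "\<bar>a\<bar> \<le> L * d" and "0 \<le> d" and "d \<le> e"
  shows "\<bar>a\<bar> \<le> max 0 (L * e)"
proof (cases "0 \<le> L")
  case True then show ?thesis using assms mult_left_mono[of d e L] by linarith
next
  case False then show ?thesis using assms mult_nonpos_nonneg[of L d] by linarith
qed

text \<open>Outside \<open>I\<close> the component is the constant \<open>undefined\<close> on the (extensional) space of
  the product, so the component map is measurable for every index; in this unconditional
  form the measurable prover can use the rules below without side conditions.\<close>

lemma measurable_PiM_borel_component:
  "(\<lambda>x. x i) \<in> (\<Pi>\<^sub>M j\<in>I. borel) \<rightarrow>\<^sub>M (borel :: 'a::topological_space measure)"
proof (cases "i \<in> I")
  case False
  have "(\<lambda>x. undefined) \<in> (\<Pi>\<^sub>M j\<in>I. borel) \<rightarrow>\<^sub>M (borel :: 'a measure)" by simp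
  then show ?thesis
    by (rule measurable_cong[THEN iffD1, rotated]) (use False in \<open>auto simp: space_PiM PiE_def extensional_def\<close>)
qed simp

lemma measurable_traj_state[measurable]:
  "(\<lambda>\<rho>. fst \<rho> t) \<in> traj_space T \<rightarrow>\<^sub>M (borel :: (real^'n::finite) measure)"
  unfolding traj_space_def by (intro measurable_compose[OF measurable_fst measurable_PiM_borel_component])

lemma measurable_traj_input[measurable]:
  "(\<lambda>\<rho>. snd \<rho> t) \<in> (traj_space T :: ('n::finite,'m::finite) traj measure) \<rightarrow>\<^sub>M (borel :: (real^'m) measure)"
  unfolding traj_space_def by (intro measurable_compose[OF measurable_snd measurable_PiM_borel_component])

lemma space_traj_space_ne: "space (traj_space T :: ('n::finite,'m::finite) traj measure) \<noteq> {}"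
proof -
  have "((\<lambda>t\<in>{1..T+1}. 0), (\<lambda>t\<in>{1..T}. 0)) \<in> space (traj_space T :: ('n,'m) traj measure)"
    unfolding traj_space_def by (simp add: space_pair_measure space_PiM)
  then show ?thesis by blast
qed

lemma sets_policy_law:
  assumes "sets Dexp = sets (traj_space T)"
  shows "sets (policy_law f Dexp \<pi> T tau_c tau_o h) = sets (traj_space T)"
proof (induction h)
  case (Suc h)
  have "space (policy_law f Dexp \<pi> T tau_c tau_o h) \<noteq> {}"
    using sets_eq_imp_space_eq[OF Suc.IH] space_traj_space_ne by simp
  then show ?case by (simp add: sets_bind[where N="traj_space T"])
qed simp

lemma traj_dist_nonneg: "0 \<le> traj_dist T a b"
  unfolding traj_dist_def by (intro real_sqrt_ge_zero add_nonneg_nonneg sum_nonneg) auto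

lemma traj_dist_le_sqrt:
  assumes "fst a 1 = fst b 1"
    and "\<forall>t\<in>{1..T}. dist (fst a (t+1)) (fst b (t+1)) \<le> \<epsilon> \<and> dist (snd a t) (snd b t) \<le> \<epsilon>"
    and "0 \<le> \<epsilon>"
  shows "traj_dist T a b \<le> sqrt (2 * real T) * \<epsilon>"
proof -
  have "(\<Sum>t=1..T+1. (dist (fst a t) (fst b t))\<^sup>2) = (\<Sum>t=Suc 1..Suc T. (dist (fst a t) (fst b t))\<^sup>2)"
    using assms(1) by (subst sum.atLeast_Suc_atMost) auto
  also have "\<dots> = (\<Sum>t=1..T. (dist (fst a (t+1)) (fst b (t+1)))\<^sup>2)"
    by (subst sum.shift_bounds_cl_Suc_ivl) simp
  also have "\<dots> \<le> (\<Sum>t=1..T. \<epsilon>\<^sup>2)"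
    using assms(2) by (intro sum_mono power_mono) auto
  finally have states: "(\<Sum>t=1..T+1. (dist (fst a t) (fst b t))\<^sup>2) \<le> real T * \<epsilon>\<^sup>2" by simp
  have "(\<Sum>t=1..T. (dist (snd a t) (snd b t))\<^sup>2) \<le> (\<Sum>t=1..T. \<epsilon>\<^sup>2)"
    using assms(2) by (intro sum_mono power_mono) auto
  then have inputs: "(\<Sum>t=1..T. (dist (snd a t) (snd b t))\<^sup>2) \<le> real T * \<epsilon>\<^sup>2" by simp
  have "traj_dist T a b \<le> sqrt (2 * real T * \<epsilon>\<^sup>2)"
    unfolding traj_dist_def using states inputs by (intro real_sqrt_le_mono) linarith
  also have "\<dots> = sqrt (2 * real T) * \<epsilon>"
    using assms(3) by (simp add: real_sqrt_mult)
  finally show ?thesis .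
qed

lemma couplingsD:
  assumes "\<mu> \<in> couplings T P Q"
  shows "prob_space \<mu>" and "sets \<mu> = sets (traj_space T \<Otimes>\<^sub>M traj_space T)"
    and "space \<mu> = space (traj_space T) \<times> space (traj_space T)"
    and "P = distr \<mu> (traj_space T) fst" and "Q = distr \<mu> (traj_space T) snd"
    and "AE z in \<mu>. fst (fst z) 1 = fst (snd z) 1"
  using assms unfolding couplings_def
  by (auto dest: sets_eq_imp_space_eq simp: space_pair_measure)

lemma couplings_prob_space:
  assumes "\<mu> \<in> couplings T P Q"
  shows "prob_space P" and "prob_space Q"
  using couplingsD[OF assms] measurable_cong_sets[OF couplingsD(2)[OF assms] refl]
  by (auto intro!: prob_space.prob_space_distr)

lemma integral_diff_eq_integral_coupling:
  fixes g :: "('n::finite,'m::finite) traj \<Rightarrow> real"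
  assumes \<mu>: "\<mu> \<in> couplings T P Q" and g_meas: "g \<in> borel_measurable (traj_space T)"
    and g_bound: "\<forall>\<rho>\<in>space (traj_space T). \<bar>g \<rho>\<bar> \<le> B"
  shows "(\<integral>\<rho>. g \<rho> \<partial>P) - (\<integral>\<rho>. g \<rho> \<partial>Q) = (\<integral>z. g (fst z) - g (snd z) \<partial>\<mu>)"
proof -
  interpret prob_space \<mu> by (rule couplingsD(1)[OF \<mu>])
  note sets_\<mu> = measurable_cong_sets[OF couplingsD(2)[OF \<mu>] refl]
  have fst: "fst \<in> \<mu> \<rightarrow>\<^sub>M traj_space T" and snd: "snd \<in> \<mu> \<rightarrow>\<^sub>M traj_space T"
    unfolding sets_\<mu> by simp_all
  have "integrable \<mu> (\<lambda>z. g (fst z))" "integrable \<mu> (\<lambda>z. g (snd z))"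
    using g_bound measurable_compose[OF fst g_meas] measurable_compose[OF snd g_meas]
    by (auto intro!: integrable_const_bound[where B=B] simp: couplingsD(3)[OF \<mu>])
  then show ?thesis
    using fst snd g_meas
    by (simp add: couplingsD(4,5)[OF \<mu>] integral_distr Bochner_Integration.integral_diff)
qed

lemma abs_integral_diff_le_coupling:
  fixes g :: "('n::finite,'m::finite) traj \<Rightarrow> real"
  assumes \<mu>: "\<mu> \<in> couplings T P Q"
    and g_meas: "g \<in> borel_measurable (traj_space T)"
    and g_bound: "\<forall>\<rho>\<in>space (traj_space T). \<bar>g \<rho>\<bar> \<le> B"
    and bad_meas: "Measurable.pred (traj_space T \<Otimes>\<^sub>M traj_space T) bad"
    and good: "\<And>a b. a \<in> space (traj_space T) \<Longrightarrow> b \<in> space (traj_space T) \<Longrightarrow>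
      fst a 1 = fst b 1 \<Longrightarrow> \<not> bad (a, b) \<Longrightarrow> \<bar>g a - g b\<bar> \<le> C"
    and "0 \<le> C"
  shows "\<bar>(\<integral>\<rho>. g \<rho> \<partial>P) - (\<integral>\<rho>. g \<rho> \<partial>Q)\<bar> \<le> 2 * B * measure \<mu> {z\<in>space \<mu>. bad z} + C"
proof -
  interpret prob_space \<mu> by (rule couplingsD(1)[OF \<mu>])
  have E: "{z\<in>space \<mu>. bad z} \<in> events"
    using bad_meas couplingsD(2)[OF \<mu>] sets_eq_imp_space_eq[OF couplingsD(2)[OF \<mu>]]
    by (simp add: pred_def)
  have G: "(\<lambda>z. g (fst z) - g (snd z)) \<in> borel_measurable \<mu>"
    unfolding measurable_cong_sets[OF couplingsD(2)[OF \<mu>] refl] using g_meas by simp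
  have "\<bar>\<integral>z. g (fst z) - g (snd z) \<partial>\<mu>\<bar> \<le> 2 * B * prob {z\<in>space \<mu>. bad z} + C"
  proof (rule abs_integral_le_event_bound[OF G _ _ E \<open>0 \<le> C\<close>])
    show "\<forall>z\<in>space \<mu>. \<bar>g (fst z) - g (snd z)\<bar> \<le> 2 * B"
    proof
      fix z assume "z \<in> space \<mu>"
      then have "\<bar>g (fst z)\<bar> \<le> B" "\<bar>g (snd z)\<bar> \<le> B"
        using g_bound by (auto simp: couplingsD(3)[OF \<mu>])
      then show "\<bar>g (fst z) - g (snd z)\<bar> \<le> 2 * B" by linarith
    qed
    show "AE z in \<mu>. z \<notin> {z\<in>space \<mu>. bad z} \<longrightarrow> \<bar>g (fst z) - g (snd z)\<bar> \<le> C"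
      using couplingsD(6)[OF \<mu>] AE_space
      by eventually_elim (auto intro!: good simp: couplingsD(3)[OF \<mu>])
  qed
  then show ?thesis
    by (simp add: integral_diff_eq_integral_coupling[OF \<mu> g_meas g_bound])
qed

lemma abs_integral_diff_le_INF_couplings:
  fixes P Q :: "('n::finite,'m::finite) traj measure" and g :: "('n,'m) traj \<Rightarrow> real"
  assumes sets_P: "sets P = sets (traj_space T)" and sets_Q: "sets Q = sets (traj_space T)"
    and g_meas: "g \<in> borel_measurable (traj_space T)"
    and g_bound: "\<forall>\<rho>\<in>space (traj_space T). \<bar>g \<rho>\<bar> \<le> B"
    and bad_meas: "Measurable.pred (traj_space T \<Otimes>\<^sub>M traj_space T) bad"
    and good: "\<And>a b. a \<in> space (traj_space T) \<Longrightarrow> b \<in> space (traj_space T) \<Longrightarrow>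
      fst a 1 = fst b 1 \<Longrightarrow> \<not> bad (a, b) \<Longrightarrow> \<bar>g a - g b\<bar> \<le> C"
    and "0 \<le> C"
  shows "ennreal \<bar>(\<integral>\<rho>. g \<rho> \<partial>P) - (\<integral>\<rho>. g \<rho> \<partial>Q)\<bar>
    \<le> ennreal (2 * B) * (INF \<mu>\<in>couplings T P Q. emeasure \<mu> {z\<in>space \<mu>. bad z}) + ennreal C"
proof -
  consider (trivial) "B \<le> 0" | (no_coupling) "0 < B" "couplings T P Q = {}"
    | (coupling) "0 < B" "couplings T P Q \<noteq> {}"
    by force
  then show ?thesis
  proof cases
    case trivial
    then have "\<forall>\<rho>\<in>space (traj_space T). g \<rho> = 0" using g_bound by force
    then have "(\<integral>\<rho>. g \<rho> \<partial>P) = 0" "(\<integral>\<rho>. g \<rho> \<partial>Q) = 0"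
      using sets_eq_imp_space_eq[OF sets_P] sets_eq_imp_space_eq[OF sets_Q]
      by (auto intro!: integral_eq_zero_AE AE_I2)
    then show ?thesis by simp
  next
    case no_coupling
    then show ?thesis by (simp add: ennreal_mult_top)
  next
    case coupling
    show ?thesis
    proof (rule le_cmult_INF_add_ennreal[OF coupling(2)])
      fix \<mu> assume \<mu>: "\<mu> \<in> couplings T P Q"
      then interpret prob_space \<mu> by (rule couplingsD(1))
      have "ennreal \<bar>(\<integral>\<rho>. g \<rho> \<partial>P) - (\<integral>\<rho>. g \<rho> \<partial>Q)\<bar> \<le> ennreal (2 * B * prob {z\<in>space \<mu>. bad z} + C)"
        using abs_integral_diff_le_coupling[OF \<mu> g_meas g_bound bad_meas good \<open>0 \<le> C\<close>]
        by (rule ennreal_leI)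
      also have "\<dots> = ennreal (2 * B) * emeasure \<mu> {z\<in>space \<mu>. bad z} + ennreal C"
        using coupling(1) \<open>0 \<le> C\<close> by (simp add: ennreal_plus ennreal_mult emeasure_eq_measure)
      finally show "ennreal \<bar>(\<integral>\<rho>. g \<rho> \<partial>P) - (\<integral>\<rho>. g \<rho> \<partial>Q)\<bar>
        \<le> ennreal (2 * B) * emeasure \<mu> {z\<in>space \<mu>. bad z} + ennreal C" .
    qed
  qed
qed

lemma lipschitz_cost_diff_le_Imit_joint:
  fixes P Q :: "('n::finite,'m::finite) traj measure" and J :: "('n,'m) traj \<Rightarrow> real"
  assumes sets_P: "sets P = sets (traj_space T)" and sets_Q: "sets Q = sets (traj_space T)"
    and J_meas: "J \<in> borel_measurable (traj_space T)"
    and J_bound: "\<forall>\<rho>\<in>space (traj_space T). \<bar>J \<rho>\<bar> \<le> B"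
    and J_lip: "\<forall>\<rho>\<in>space (traj_space T). \<forall>\<rho>'\<in>space (traj_space T). \<bar>J \<rho> - J \<rho>'\<bar> \<le> L * traj_dist T \<rho> \<rho>'"
    and "0 \<le> \<epsilon>"
  shows "ennreal \<bar>(\<integral>\<rho>. J \<rho> \<partial>P) - (\<integral>\<rho>. J \<rho> \<partial>Q)\<bar>
    \<le> ennreal (sqrt (2 * real T) * L * \<epsilon>) + ennreal (2 * B) * Imit_joint T \<epsilon> P Q"
proof -
  have "ennreal \<bar>(\<integral>\<rho>. J \<rho> \<partial>P) - (\<integral>\<rho>. J \<rho> \<partial>Q)\<bar>
    \<le> ennreal (2 * B) * Imit_joint T \<epsilon> P Q + ennreal (max 0 (L * (sqrt (2 * real T) * \<epsilon>)))"
    unfolding Imit_joint_def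
  proof (rule abs_integral_diff_le_INF_couplings[OF sets_P sets_Q J_meas J_bound])
    fix a b :: "('n,'m) traj"
    assume a: "a \<in> space (traj_space T)" and b: "b \<in> space (traj_space T)"
      and "fst a 1 = fst b 1"
      and "\<not> (\<exists>t\<in>{1..T}. max (dist (fst (fst (a, b)) (t+1)) (fst (snd (a, b)) (t+1)))
                (dist (snd (fst (a, b)) t) (snd (snd (a, b)) t)) > \<epsilon>)"
    then have "traj_dist T a b \<le> sqrt (2 * real T) * \<epsilon>"
      using \<open>0 \<le> \<epsilon>\<close> by (intro traj_dist_le_sqrt) (auto simp: not_less)
    then show "\<bar>J a - J b\<bar> \<le> max 0 (L * (sqrt (2 * real T) * \<epsilon>))"
      using J_lip a b traj_dist_nonneg[of T a b] by (intro abs_le_max_0_mult) auto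
  next
    show "Measurable.pred (traj_space T \<Otimes>\<^sub>M traj_space T) (\<lambda>z. \<exists>t\<in>{1..T}.
      max (dist (fst (fst z) (t+1)) (fst (snd z) (t+1))) (dist (snd (fst z) t) (snd (snd z) t)) > \<epsilon>)"
      by measurable
  qed simp
  then show ?thesis by (simp add: ennreal_max_0 ac_simps)
qed

lemma final_cost_diff_le_Imit_fin:
  fixes P Q :: "('n::finite,'m::finite) traj measure" and c :: "real^'n \<Rightarrow> real"
  assumes sets_P: "sets P = sets (traj_space T)" and sets_Q: "sets Q = sets (traj_space T)"
    and c: "\<forall>x y. \<bar>c x - c y\<bar> \<le> L * dist x y \<and> \<bar>c x\<bar> \<le> B"
  shows "ennreal \<bar>(\<integral>\<rho>. c (fst \<rho> (T+1)) \<partial>P) - (\<integral>\<rho>. c (fst \<rho> (T+1)) \<partial>Q)\<bar>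
    \<le> ennreal (2 * B) * Imit_fin T \<epsilon> P Q + ennreal (L * \<epsilon>)"
proof -
  have [measurable]: "c \<in> borel_measurable borel"
    using c by (intro borel_measurable_lipschitz_bound) blast
  have "ennreal \<bar>(\<integral>\<rho>. c (fst \<rho> (T+1)) \<partial>P) - (\<integral>\<rho>. c (fst \<rho> (T+1)) \<partial>Q)\<bar>
    \<le> ennreal (2 * B) * Imit_fin T \<epsilon> P Q + ennreal (max 0 (L * \<epsilon>))"
    unfolding Imit_fin_def
  proof (rule abs_integral_diff_le_INF_couplings[OF sets_P sets_Q])
    fix a b :: "('n,'m) traj"
    assume "\<not> dist (fst (fst (a, b)) (T+1)) (fst (snd (a, b)) (T+1)) > \<epsilon>"
    then show "\<bar>c (fst a (T+1)) - c (fst b (T+1))\<bar> \<le> max 0 (L * \<epsilon>)"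
      using c by (intro abs_le_max_0_mult[of _ L "dist (fst a (T+1)) (fst b (T+1))"]) auto
  next
    show "Measurable.pred (traj_space T \<Otimes>\<^sub>M traj_space T)
      (\<lambda>z. dist (fst (fst z) (T+1)) (fst (snd z) (T+1)) > \<epsilon>)"
      by measurable
  qed (use c in auto)
  then show ?thesis by (simp add: ennreal_max_0)
qed

lemma sum_regroup_shift:
  fixes f h :: "nat \<Rightarrow> 'a::comm_monoid_add"
  shows "f (T+1) + (\<Sum>t=1..T. f t + h t) = f 1 + (\<Sum>s=1..T. f (s+1) + h s)"
proof -
  have "f (T+1) + (\<Sum>t=1..T. f t) = (\<Sum>t=1..Suc T. f t)"
    by (simp add: add.commute)
  also have "\<dots> = f 1 + (\<Sum>t=Suc 1..Suc T. f t)"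
    by (subst sum.atLeast_Suc_atMost) auto
  also have "\<dots> = f 1 + (\<Sum>s=1..T. f (s+1))"
    by (subst sum.shift_bounds_cl_Suc_ivl) simp
  finally show ?thesis
    by (simp add: sum.distrib add.assoc[symmetric])
qed

lemma stage_cost_diff_le_Imit_marg:
  fixes P Q :: "('n::finite,'m::finite) traj measure"
    and c :: "real^'n \<Rightarrow> real" and c' :: "real^'m \<Rightarrow> real"
  assumes sets_P: "sets P = sets (traj_space T)" and sets_Q: "sets Q = sets (traj_space T)"
    and s: "s \<in> {1..T}"
    and c: "\<forall>x y. \<bar>c x - c y\<bar> \<le> L * dist x y \<and> \<bar>c x\<bar> \<le> B"
    and c': "\<forall>x y. \<bar>c' x - c' y\<bar> \<le> L * dist x y \<and> \<bar>c' x\<bar> \<le> B"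
  shows "ennreal \<bar>(\<integral>\<rho>. c (fst \<rho> (s+1)) + c' (snd \<rho> s) \<partial>P) - (\<integral>\<rho>. c (fst \<rho> (s+1)) + c' (snd \<rho> s) \<partial>Q)\<bar>
    \<le> ennreal (4 * B) * Imit_marg T \<epsilon> P Q + ennreal (2 * L * \<epsilon>)"
proof -
  have [measurable]: "c \<in> borel_measurable borel"
    using c by (intro borel_measurable_lipschitz_bound) blast
  have [measurable]: "c' \<in> borel_measurable borel"
    using c' by (intro borel_measurable_lipschitz_bound) blast
  have bound: "\<bar>c (fst \<rho> (s+1)) + c' (snd \<rho> s)\<bar> \<le> 2 * B" for \<rho> :: "('n,'m) traj"
  proof -
    have "\<bar>c (fst \<rho> (s+1))\<bar> \<le> B" "\<bar>c' (snd \<rho> s)\<bar> \<le> B" using c c' by auto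
    then show ?thesis by linarith
  qed
  have "ennreal \<bar>(\<integral>\<rho>. c (fst \<rho> (s+1)) + c' (snd \<rho> s) \<partial>P) - (\<integral>\<rho>. c (fst \<rho> (s+1)) + c' (snd \<rho> s) \<partial>Q)\<bar>
    \<le> ennreal (2 * (2 * B)) * (INF \<mu>\<in>couplings T P Q. emeasure \<mu> {z\<in>space \<mu>.
         max (dist (fst (fst z) (s+1)) (fst (snd z) (s+1))) (dist (snd (fst z) s) (snd (snd z) s)) > \<epsilon>})
      + ennreal (max 0 (2 * L * \<epsilon>))"
  proof (rule abs_integral_diff_le_INF_couplings[OF sets_P sets_Q])
    fix a b :: "('n,'m) traj"
    assume "\<not> max (dist (fst (fst (a, b)) (s+1)) (fst (snd (a, b)) (s+1)))
              (dist (snd (fst (a, b)) s) (snd (snd (a, b)) s)) > \<epsilon>"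
    then have "\<bar>c (fst a (s+1)) - c (fst b (s+1))\<bar> \<le> max 0 (L * \<epsilon>)"
      and "\<bar>c' (snd a s) - c' (snd b s)\<bar> \<le> max 0 (L * \<epsilon>)"
      using c c' by (auto intro!: abs_le_max_0_mult[where L=L])
    then show "\<bar>c (fst a (s+1)) + c' (snd a s) - (c (fst b (s+1)) + c' (snd b s))\<bar> \<le> max 0 (2 * L * \<epsilon>)"
      by (simp add: max_def split: if_splits)
  next
    show "Measurable.pred (traj_space T \<Otimes>\<^sub>M traj_space T) (\<lambda>z.
      max (dist (fst (fst z) (s+1)) (fst (snd z) (s+1))) (dist (snd (fst z) s) (snd (snd z) s)) > \<epsilon>)"
      by measurable
  qed (use bound in auto)
  also have "\<dots> \<le> ennreal (4 * B) * Imit_marg T \<epsilon> P Q + ennreal (2 * L * \<epsilon>)"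
    unfolding Imit_marg_def ennreal_max_0 using s by (auto intro!: add_mono mult_left_mono SUP_upper)
  finally show ?thesis .
qed

lemma integral_diff_initial_cost_cancels:
  fixes P Q :: "('n::finite,'m::finite) traj measure"
    and h :: "real^'n \<Rightarrow> real" and g :: "nat \<Rightarrow> ('n,'m) traj \<Rightarrow> real"
  assumes \<mu>: "\<mu> \<in> couplings T P Q"
    and sets_P: "sets P = sets (traj_space T)" and sets_Q: "sets Q = sets (traj_space T)"
    and h_meas: "h \<in> borel_measurable borel" and h_bound: "\<forall>x. \<bar>h x\<bar> \<le> B"
    and g_meas: "\<And>s. s \<in> S \<Longrightarrow> g s \<in> borel_measurable (traj_space T)"
    and g_bound: "\<And>s \<rho>. s \<in> S \<Longrightarrow> \<bar>g s \<rho>\<bar> \<le> K"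
  shows "(\<integral>\<rho>. h (fst \<rho> 1) + (\<Sum>s\<in>S. g s \<rho>) \<partial>P) - (\<integral>\<rho>. h (fst \<rho> 1) + (\<Sum>s\<in>S. g s \<rho>) \<partial>Q)
    = (\<Sum>s\<in>S. (\<integral>\<rho>. g s \<rho> \<partial>P) - (\<integral>\<rho>. g s \<rho> \<partial>Q))"
proof -
  have h1_meas: "(\<lambda>\<rho>. h (fst \<rho> 1)) \<in> borel_measurable (traj_space T)"
    using h_meas by simp
  have split: "(\<integral>\<rho>. h (fst \<rho> 1) + (\<Sum>s\<in>S. g s \<rho>) \<partial>R) = (\<integral>\<rho>. h (fst \<rho> 1) \<partial>R) + (\<Sum>s\<in>S. \<integral>\<rho>. g s \<rho> \<partial>R)"
    if "R \<in> {P, Q}" for R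
  proof -
    interpret finite_measure R
      using that couplings_prob_space[OF \<mu>] by (auto intro: prob_space.finite_measure)
    have sets_R: "sets R = sets (traj_space T)" using that sets_P sets_Q by auto
    show ?thesis
      using integrable_bounded_sets_eq[OF sets_R h1_meas, of B] h_bound
        integrable_bounded_sets_eq[OF sets_R g_meas, of _ K] g_bound
      by (subst Bochner_Integration.integral_add) (auto intro!: Bochner_Integration.integral_sum)
  qed
  have "(\<integral>\<rho>. h (fst \<rho> 1) \<partial>P) - (\<integral>\<rho>. h (fst \<rho> 1) \<partial>Q) = 0"
    using couplingsD(6)[OF \<mu>] h_bound
    by (subst integral_diff_eq_integral_coupling[OF \<mu> h1_meas, of B]) (auto intro!: integral_eq_zero_AE)
  then show ?thesis
    using split[of P] split[of Q] by (simp add: sum_subtractf)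
qed

lemma stagewise_cost_diff_le_Imit_marg:
  fixes P Q :: "('n::finite,'m::finite) traj measure"
    and c :: "nat \<Rightarrow> real^'n \<Rightarrow> real" and c' :: "nat \<Rightarrow> real^'m \<Rightarrow> real"
  assumes T: "1 \<le> T"
    and sets_P: "sets P = sets (traj_space T)" and sets_Q: "sets Q = sets (traj_space T)"
    and c: "\<forall>t\<in>{1..T+1}. \<forall>x y. \<bar>c t x - c t y\<bar> \<le> L * dist x y \<and> \<bar>c t x\<bar> \<le> B"
    and c': "\<forall>t\<in>{1..T}. \<forall>x y. \<bar>c' t x - c' t y\<bar> \<le> L * dist x y \<and> \<bar>c' t x\<bar> \<le> B"
  shows "let J = (\<lambda>\<rho>. c (T+1) (fst \<rho> (T+1)) + (\<Sum>t=1..T. c t (fst \<rho> t) + c' t (snd \<rho> t)))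
    in ennreal \<bar>(\<integral>\<rho>. J \<rho> \<partial>P) - (\<integral>\<rho>. J \<rho> \<partial>Q)\<bar>
      \<le> ennreal (4 * real T * B) * Imit_marg T \<epsilon> P Q + ennreal (2 * real T * L * \<epsilon>)"
proof -
  define g where "g s \<rho> = c (s+1) (fst \<rho> (s+1)) + c' s (snd \<rho> s)" for s and \<rho> :: "('n,'m) traj"
  define J :: "('n,'m) traj \<Rightarrow> real" where "J \<rho> = c 1 (fst \<rho> 1) + (\<Sum>s=1..T. g s \<rho>)" for \<rho>
  have c_meas: "c t \<in> borel_measurable borel" if "t \<in> {1..T+1}" for t
    using c that by (intro borel_measurable_lipschitz_bound) blast
  have c'_meas: "c' t \<in> borel_measurable borel" if "t \<in> {1..T}" for t
    using c' that by (intro borel_measurable_lipschitz_bound) blast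
  have g_meas: "g s \<in> borel_measurable (traj_space T)" if "s \<in> {1..T}" for s
    using c_meas[of "s+1"] c'_meas[of s] that unfolding g_def by simp
  have g_bound: "\<bar>g s \<rho>\<bar> \<le> 2 * B" if "s \<in> {1..T}" for s \<rho>
  proof -
    have "\<bar>c (s+1) (fst \<rho> (s+1))\<bar> \<le> B" "\<bar>c' s (snd \<rho> s)\<bar> \<le> B" using c c' that by auto
    then show ?thesis unfolding g_def by linarith
  qed
  have g_diff: "ennreal \<bar>(\<integral>\<rho>. g s \<rho> \<partial>P) - (\<integral>\<rho>. g s \<rho> \<partial>Q)\<bar>
      \<le> ennreal (4 * B) * Imit_marg T \<epsilon> P Q + ennreal (2 * L * \<epsilon>)" if "s \<in> {1..T}" for s
    unfolding g_def using c c' that by (intro stage_cost_diff_le_Imit_marg[OF sets_P sets_Q]) auto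
  consider (trivial) "B \<le> 0" | (no_coupling) "0 < B" "couplings T P Q = {}"
    | (coupling) \<mu> where "\<mu> \<in> couplings T P Q"
    by force
  then have "ennreal \<bar>(\<integral>\<rho>. J \<rho> \<partial>P) - (\<integral>\<rho>. J \<rho> \<partial>Q)\<bar>
      \<le> ennreal (4 * real T * B) * Imit_marg T \<epsilon> P Q + ennreal (2 * real T * L * \<epsilon>)"
  proof cases
    case trivial
    have "c t x = 0" if "t \<in> {1..T+1}" for t x
      using c that trivial by (meson abs_le_zero_iff order_trans)
    moreover have "c' t x = 0" if "t \<in> {1..T}" for t x
      using c' that trivial by (meson abs_le_zero_iff order_trans)
    ultimately have "J = (\<lambda>_. 0)"
      unfolding J_def g_def by (auto intro!: sum.neutral)
    then show ?thesis by simp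
  next
    case no_coupling
    then show ?thesis using T by (simp add: Imit_marg_def ennreal_mult_top)
  next
    case coupling
    have "ennreal \<bar>(\<integral>\<rho>. J \<rho> \<partial>P) - (\<integral>\<rho>. J \<rho> \<partial>Q)\<bar>
        = ennreal \<bar>\<Sum>s=1..T. (\<integral>\<rho>. g s \<rho> \<partial>P) - (\<integral>\<rho>. g s \<rho> \<partial>Q)\<bar>"
      unfolding J_def using c c_meas[of 1] g_meas g_bound
      by (subst integral_diff_initial_cost_cancels[OF coupling sets_P sets_Q, where B=B and K="2 * B"]) auto
    also have "\<dots> \<le> of_nat T * (ennreal (4 * B) * Imit_marg T \<epsilon> P Q + ennreal (2 * L * \<epsilon>))"
      using ennreal_abs_sum_le_card_mult[where S="{1..T}", OF g_diff] by simp
    also have "\<dots> = ennreal (4 * real T * B) * Imit_marg T \<epsilon> P Q + ennreal (2 * real T * L * \<epsilon>)"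
      by (simp add: ennreal_of_nat_eq_real_of_nat distrib_left mult.assoc[symmetric]
          ennreal_mult'[symmetric] mult.commute[of "real T"])
    finally show ?thesis .
  qed
  moreover have "J \<rho> = c (T+1) (fst \<rho> (T+1)) + (\<Sum>t=1..T. c t (fst \<rho> t) + c' t (snd \<rho> t))" for \<rho>
    unfolding J_def g_def using sum_regroup_shift[of "\<lambda>t. c t (fst \<rho> t)" T "\<lambda>t. c' t (snd \<rho> t)"] by simp
  ultimately show ?thesis by (simp add: Let_def)
qed

theorem proposition9:
  fixes f :: "real^'n \<Rightarrow> real^'m \<Rightarrow> real^'n"
    and Dexp :: "('n::finite,'m::finite) traj measure"
    and \<pi> :: "nat \<Rightarrow> (nat \<Rightarrow> real^'n) \<times> (nat \<Rightarrow> real^'m) \<Rightarrow> (nat \<Rightarrow> ('n,'m) ctrl) measure"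
    and H tau_c tau_o T :: nat and \<epsilon> :: real
  assumes "T = H * tau_c" and "1 \<le> H" and "1 \<le> tau_o" and "tau_o \<le> tau_c"
    and "case_prod f \<in> borel_measurable borel"
    and "prob_space Dexp" and "sets Dexp = sets (traj_space T)"
    and "\<forall>h\<in>{1..H}. \<pi> h \<in> obs_space tau_o \<rightarrow>\<^sub>M prob_algebra (act_space tau_c)"
    and "\<epsilon> > 0"
  defines "Dpi \<equiv> policy_law f Dexp \<pi> T tau_c tau_o H"
  shows
   "(\<forall>(J :: ('n,'m) traj \<Rightarrow> real) B L.
       J \<in> borel_measurable (traj_space T)
       \<and> (\<forall>\<rho>\<in>space (traj_space T). \<bar>J \<rho>\<bar> \<le> B)
       \<and> (\<forall>\<rho>\<in>space (traj_space T). \<forall>\<rho>'\<in>space (traj_space T). \<bar>J \<rho> - J \<rho>'\<bar> \<le> L * traj_dist T \<rho> \<rho>')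
       \<longrightarrow> ennreal \<bar>(\<integral>\<rho>. J \<rho> \<partial>Dexp) - (\<integral>\<rho>. J \<rho> \<partial>Dpi)\<bar>
           \<le> ennreal (sqrt (2 * real T) * L * \<epsilon>) + ennreal (2 * B) * Imit_joint T \<epsilon> Dexp Dpi)
    \<and> (\<forall>(c :: nat \<Rightarrow> real^'n \<Rightarrow> real) (c' :: nat \<Rightarrow> real^'m \<Rightarrow> real) B L.
       (\<forall>t\<in>{1..T+1}. \<forall>x y. \<bar>c t x - c t y\<bar> \<le> L * dist x y \<and> \<bar>c t x\<bar> \<le> B)
       \<and> (\<forall>t\<in>{1..T}. \<forall>x y. \<bar>c' t x - c' t y\<bar> \<le> L * dist x y \<and> \<bar>c' t x\<bar> \<le> B)
       \<longrightarrow> (let J = (\<lambda>\<rho>. c (T+1) (fst \<rho> (T+1)) + (\<Sum>t=1..T. c t (fst \<rho> t) + c' t (snd \<rho> t)))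
            in ennreal \<bar>(\<integral>\<rho>. J \<rho> \<partial>Dexp) - (\<integral>\<rho>. J \<rho> \<partial>Dpi)\<bar>
               \<le> ennreal (4 * real T * B) * Imit_marg T \<epsilon> Dexp Dpi + ennreal (2 * real T * L * \<epsilon>)))
    \<and> (\<forall>(c :: real^'n \<Rightarrow> real) B L.
       (\<forall>x y. \<bar>c x - c y\<bar> \<le> L * dist x y \<and> \<bar>c x\<bar> \<le> B)
       \<longrightarrow> ennreal \<bar>(\<integral>\<rho>. c (fst \<rho> (T+1)) \<partial>Dexp) - (\<integral>\<rho>. c (fst \<rho> (T+1)) \<partial>Dpi)\<bar>
           \<le> ennreal (2 * B) * Imit_fin T \<epsilon> Dexp Dpi + ennreal (L * \<epsilon>))"
proof -
  have T: "1 \<le> T"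
    using assms(1-4) by (simp add: one_le_mult_iff)
  have sets_Dpi: "sets Dpi = sets (traj_space T)"
    unfolding Dpi_def by (rule sets_policy_law[OF assms(7)])
  show ?thesis
    using lipschitz_cost_diff_le_Imit_joint[OF assms(7) sets_Dpi]
      stagewise_cost_diff_le_Imit_marg[OF T assms(7) sets_Dpi]
      final_cost_diff_le_Imit_fin[OF assms(7) sets_Dpi] less_imp_le[OF \<open>\<epsilon> > 0\<close>]
    by (intro conjI allI impI) blast+
qed

end
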